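(* Let $t\in\mathbb{N}_{>0}$ be a time parameter. (1) There exists a deterministic neural timer network with time parameter $t$ that uses $O(\log t)$ deterministic threshold gates. (2) Every deterministic neural timer network with time parameter $t$ requires $\Omega(\log t)$ neurons.
   Context: A neural network consists of input neurons (no incoming edges), output neurons and auxiliary neurons, connected by directed weighted edges with weights $w(u,v)\in\mathbb{R}$ ($w(u,v)=0$ means no edge; self-loops are allowed); every neuron $v$ has a threshold $b(v)\ge 0$, and every neuron is either excitatory (all outgoing weights $\ge 0$) or inhibitory (all outgoing weights $\le 0$). The network evolves in discrete synchronous rounds; $u^\tau\in\{0,1\}$ indicates whether $u$ fires in round $\tau$, the firing of input neurons is given externally, and for a non-input neuron $u$ the potential is $\mathrm{pot}(u,\tau)=\sum_v w(v,u)\,v^{\tau-1}-b(u)$. A deterministic threshold gate fires in round $\tau$ iff $\mathrm{pot}(u,\tau)\ge 0$. Neurons have no memory beyond this rule. The size of a network is measured by its number of auxiliary neurons. A deterministic neural timer with time parameter $t$ is a network of deterministic threshold gates with one input neuron $x$, one output neuron $y$ and auxiliary neurons, such that in every round $\tau$, $y^\tau=1$ iff there exists a round $\tau'$ with $\tau-t\le\tau'<\tau$ and $x^{\tau'}=1$. *)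

theory Defs
  imports Complex_Main
begin

text \<open>Neurons are identified by natural numbers; the network
consists of the finite set of neurons \<open>nodes\<close>, a distinguished input
neuron, a distinguished output neuron (all other neurons are auxiliary),
edge weights \<open>wt u v\<close> (weight of the edge from u to v, 0 = no edge,
self loops allowed) and thresholds \<open>thr\<close>.\<close>

record net =
  nodes :: "nat set"
  inp :: nat
  outp :: nat
  wt :: "nat \<Rightarrow> nat \<Rightarrow> real"
  thr :: "nat \<Rightarrow> real"

definition valid_net :: "net \<Rightarrow> bool" where
  "valid_net N \<longleftrightarrow>
     finite (nodes N) \<and> inp N \<in> nodes N \<and> outp N \<in> nodes N \<and> inp N \<noteq> outp N \<and>
     (\<forall>u v. (u \<notin> nodes N \<or> v \<notin> nodes N) \<longrightarrow> wt N u v = 0) \<and>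
     (\<forall>u. wt N u (inp N) = 0) \<and>
     (\<forall>v \<in> nodes N. thr N v \<ge> 0) \<and>
     (\<forall>u \<in> nodes N. (\<forall>v. wt N u v \<ge> 0) \<or> (\<forall>v. wt N u v \<le> 0))"

text \<open>Number of auxiliary neurons (the size of the network).\<close>
definition aux_count :: "net \<Rightarrow> nat" where
  "aux_count N = card (nodes N - {inp N, outp N})"

fun fires :: "net \<Rightarrow> (nat \<Rightarrow> bool) \<Rightarrow> nat \<Rightarrow> nat \<Rightarrow> bool" where
  "fires N X 0 v = (v = inp N \<and> X 0)"
| "fires N X (Suc \<tau>) v =
     (if v = inp N then X (Suc \<tau>)
      else v \<in> nodes N \<and>
           (\<Sum>u\<in>nodes N. wt N u v * (if fires N X \<tau> u then 1 else 0)) - thr N v \<ge> 0)"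

definition is_det_timer :: "net \<Rightarrow> nat \<Rightarrow> bool" where
  "is_det_timer N t \<longleftrightarrow> valid_net N \<and>
     (\<forall>X \<tau>. fires N X \<tau> (outp N) \<longleftrightarrow> (\<exists>\<tau>'. \<tau> \<le> \<tau>' + t \<and> \<tau>' < \<tau> \<and> X \<tau>'))"

end

theory Submission
  imports Defs "HOL-Library.Countable" "HOL-Library.Discrete_Functions"
begin

text \<open>Lower bound: feed a single input spike at round 0. A network is a deterministic
system whose next firing set depends only on the current one and the input, so if the
firing sets in two rounds \<open>1 \<le> i < j \<le> t + 1\<close> coincided, shifting both rounds forward until
\<open>j\<close> reaches \<open>t + 1\<close> would make the output behave alike in a round \<open>\<le> t\<close>, where it must
fire, and in round \<open>t + 1\<close>, where it must not. Hence these \<open>t + 1\<close> firing sets are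
distinct subsets of the non-input neurons, and \<open>t + 1 \<le> 2 ^ (n + 1)\<close> for \<open>n\<close> auxiliary
neurons.

Upper bound: a binary down-counter with \<open>k = \<lfloor>log\<^sub>2 t\<rfloor>\<close> bits. An input spike resets
all counter neurons and two rounds later loads \<open>\<approx> t / 2\<close> into the register; from then on
the register is decremented every second round and the output fires as long as the
counter is nonzero. Decrementing flips bit \<open>i\<close> iff all lower bits are zero, which is not
a threshold function of the old bits, so it takes two layers of gates; this is why the
counter runs at half speed.\<close>

section \<open>Distinct firing sets and the lower bound\<close>

definition active :: "net \<Rightarrow> (nat \<Rightarrow> bool) \<Rightarrow> nat \<Rightarrow> nat set" where
  "active N X \<tau> = {v \<in> nodes N. fires N X \<tau> v}"

lemma active_Suc_cong:
  assumes "active N X a = active N X b" "X (Suc a) = X (Suc b)"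
  shows "active N X (Suc a) = active N X (Suc b)"
proof -
  have "fires N X a u = fires N X b u" if "u \<in> nodes N" for u
    using assms(1) that unfolding active_def by blast
  then have "(\<Sum>u\<in>nodes N. wt N u v * (if fires N X a u then 1 else 0)) =
             (\<Sum>u\<in>nodes N. wt N u v * (if fires N X b u then 1 else 0))" for v
    by (intro sum.cong) auto
  then show ?thesis using assms(2) unfolding active_def by simp
qed

lemma active_shift:
  assumes "active N X a = active N X b" "\<And>d. X (Suc (a + d)) = X (Suc (b + d))"
  shows "active N X (a + d) = active N X (b + d)"
proof (induction d)
  case (Suc d)
  then show ?case using active_Suc_cong[of N X "a + d" "b + d"] assms(2)[of d] by simp
qed (simp add: assms(1))

lemma det_timer_time_bound:
  assumes "is_det_timer N t"
  shows "t + 1 \<le> 2 ^ (aux_count N + 1)"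
proof -
  define X :: "nat \<Rightarrow> bool" where "X \<tau> \<longleftrightarrow> \<tau> = 0" for \<tau>
  have valid: "valid_net N"
    and out: "\<And>\<tau>. fires N X \<tau> (outp N) \<longleftrightarrow> 0 < \<tau> \<and> \<tau> \<le> t"
    using assms by (auto simp: is_det_timer_def X_def)
  have out_active: "outp N \<in> active N X \<tau> \<longleftrightarrow> 0 < \<tau> \<and> \<tau> \<le> t" for \<tau>
    using valid out by (simp add: active_def valid_net_def)
  have "active N X i \<noteq> active N X j" if "1 \<le> i" "i < j" "j \<le> t + 1" for i j
  proof
    assume "active N X i = active N X j"
    then have "active N X (i + (t + 1 - j)) = active N X (j + (t + 1 - j))"
      by (rule active_shift) (use that in \<open>simp add: X_def\<close>)
    moreover have "j + (t + 1 - j) = t + 1" "0 < i + (t + 1 - j)" "i + (t + 1 - j) \<le> t"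
      using that by auto
    ultimately have "outp N \<in> active N X (t + 1)" using out_active[of "i + (t + 1 - j)"] by simp
    then show False using out_active[of "t + 1"] by simp
  qed
  then have "inj_on (active N X) {1..t + 1}"
    by (intro inj_onI) (metis atLeastAtMost_iff linorder_neqE_nat)
  moreover have "active N X ` {1..t + 1} \<subseteq> Pow (nodes N - {inp N})"
    by (auto simp: active_def X_def elim: fires.elims)
  moreover have fin: "finite (nodes N - {inp N})"
    using valid by (simp add: valid_net_def)
  ultimately have "card {1..t + 1} \<le> 2 ^ card (nodes N - {inp N})"
    using card_inj_on_le[of "active N X" "{1..t + 1}" "Pow (nodes N - {inp N})"]
    by (simp add: card_Pow)
  moreover have "card (nodes N - {inp N}) = aux_count N + 1"
  proof -
    have "nodes N - {inp N} = insert (outp N) (nodes N - {inp N, outp N})"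
      using valid by (auto simp: valid_net_def)
    then show ?thesis using fin by (simp add: aux_count_def)
  qed
  ultimately show ?thesis by simp
qed

section \<open>Binary digits\<close>

lemma exp_dvd_iff_not_bit_below: "2 ^ i dvd (v::nat) \<longleftrightarrow> (\<forall>j<i. \<not> bit v j)"
  by (auto simp: take_bit_eq_0_iff[symmetric] bit_eq_iff bit_take_bit_iff)

lemma bit_imp_exp_le: "bit (v::nat) i \<Longrightarrow> 2 ^ i \<le> v"
  by (metis bit_iff_odd div_eq_0_iff even_zero not_le)

lemma ex_bit_ge_iff:
  assumes "(v::nat) < 2 ^ k"
  shows "(\<exists>i<k. p \<le> i \<and> bit v i) \<longleftrightarrow> 2 ^ p \<le> v"
proof
  assume "\<exists>i<k. p \<le> i \<and> bit v i"
  then obtain i where "p \<le> i" "bit v i" by blast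
  then show "2 ^ p \<le> v" using bit_imp_exp_le[of v i] power_increasing[of p i "2::nat"] by linarith
next
  assume "2 ^ p \<le> v"
  then have "drop_bit p v \<noteq> 0" by (simp add: drop_bit_eq_div div_eq_0_iff)
  then obtain j where "bit v (p + j)" by (auto simp: bit_eq_iff bit_drop_bit_eq)
  moreover have "p + j < k" using calculation assms bit_imp_exp_le[of v "p + j"]
    by (meson le_less_trans nat_power_less_imp_less zero_less_numeral)
  ultimately show "\<exists>i<k. p \<le> i \<and> bit v i" by (intro exI[of _ "p + j"]) simp
qed

lemma bit_decr_iff:
  "0 < (v::nat) \<Longrightarrow> bit (v - 1) i \<longleftrightarrow> (bit v i \<noteq> (2 ^ i dvd v))"
proof (induction i arbitrary: v)
  case 0
  then show ?case by (simp add: bit_0)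
next
  case (Suc i)
  show ?case
  proof (cases "even v")
    case True
    then have "(v - 1) div 2 = v div 2 - 1" "0 < v div 2" using Suc.prems by presburger+
    moreover have "2 ^ Suc i dvd v \<longleftrightarrow> 2 ^ i dvd v div 2" using True by auto
    ultimately show ?thesis using Suc.IH[of "v div 2"] by (simp add: bit_Suc)
  next
    case False
    then have "(v - 1) div 2 = v div 2" "\<not> 2 ^ Suc i dvd v" by (presburger, auto)
    then show ?thesis by (simp add: bit_Suc)
  qed
qed

section \<open>Networks on a countable type of neurons\<close>

definition net_of ::
  "'a::countable set \<Rightarrow> 'a \<Rightarrow> 'a \<Rightarrow> ('a \<Rightarrow> 'a \<Rightarrow> real) \<Rightarrow> ('a \<Rightarrow> real) \<Rightarrow> net"
  where "net_of V x y w \<theta> =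
    \<lparr>nodes = to_nat ` V, inp = to_nat x, outp = to_nat y,
     wt = (\<lambda>u v. if u \<in> to_nat ` V \<and> v \<in> to_nat ` V then w (from_nat u) (from_nat v) else 0),
     thr = (\<lambda>v. \<theta> (from_nat v))\<rparr>"

lemma fires_net_of_inp: "fires (net_of V x y w \<theta>) X \<tau> (to_nat x) = X \<tau>"
  by (cases \<tau>) (simp_all add: net_of_def)

lemma fires_net_of_0: "a \<noteq> x \<Longrightarrow> \<not> fires (net_of V x y w \<theta>) X 0 (to_nat a)"
  by (simp add: net_of_def)

lemma fires_net_of_Suc:
  assumes "a \<in> V" "a \<noteq> x"
  shows "fires (net_of V x y w \<theta>) X (Suc \<tau>) (to_nat a) \<longleftrightarrow>
    \<theta> a \<le> (\<Sum>b\<in>V. w b a * of_bool (fires (net_of V x y w \<theta>) X \<tau> (to_nat b)))"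
proof -
  have "inj_on to_nat V" by (simp add: inj_on_def)
  then show ?thesis using assms
    by (simp add: net_of_def sum.reindex of_bool_def cong: if_cong)
qed

lemma valid_net_of:
  assumes "finite V" "x \<in> V" "y \<in> V" "x \<noteq> y" "\<forall>b\<in>V. w b x = 0" "\<forall>a\<in>V. 0 \<le> \<theta> a"
    and "\<forall>a\<in>V. (\<forall>b\<in>V. 0 \<le> w a b) \<or> (\<forall>b\<in>V. w a b \<le> 0)"
  shows "valid_net (net_of V x y w \<theta>)"
proof -
  have sign: "(\<forall>v. 0 \<le> wt (net_of V x y w \<theta>) (to_nat a) v) \<or>
      (\<forall>v. wt (net_of V x y w \<theta>) (to_nat a) v \<le> 0)"
    if "a \<in> V" for a
    using assms(7) that by (auto simp: net_of_def)
  show ?thesis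
    using assms sign unfolding valid_net_def by (auto simp: net_of_def)
qed

lemma aux_count_net_of:
  assumes "x \<in> V" "y \<in> V"
  shows "aux_count (net_of V x y w \<theta>) = card (V - {x, y})"
proof -
  have "to_nat ` V - {to_nat x, to_nat y} = to_nat ` (V - {x, y})" by auto
  then show ?thesis by (simp add: aux_count_def net_of_def card_image inj_on_def)
qed

section \<open>A binary down-counter\<close>

lemma obtain_last_input:
  fixes X :: "nat \<Rightarrow> bool"
  assumes "\<exists>i<\<tau>. X i"
  obtains M where "M < \<tau>" "X M" "\<forall>i. M < i \<and> i < \<tau> \<longrightarrow> \<not> X i"
proof -
  define M where "M = Max {i. i < \<tau> \<and> X i}"
  have "finite {i. i < \<tau> \<and> X i}" by simp
  then have "M < \<tau> \<and> X M" "\<forall>i. i < \<tau> \<and> X i \<longrightarrow> i \<le> M"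
    using Max_in[of "{i. i < \<tau> \<and> X i}"] Max_ge[of "{i. i < \<tau> \<and> X i}"] assms
    unfolding M_def by auto
  then show thesis using that by force
qed

lemma recent_input_iff_last_input:
  assumes "X M" "\<forall>i. M < i \<and> i \<le> M + n \<longrightarrow> \<not> X i"
  shows "(\<exists>\<tau>'. Suc (M + n) \<le> \<tau>' + t \<and> \<tau>' < Suc (M + n) \<and> X \<tau>') \<longleftrightarrow> n < t"
proof
  assume "\<exists>\<tau>'. Suc (M + n) \<le> \<tau>' + t \<and> \<tau>' < Suc (M + n) \<and> X \<tau>'"
  then obtain \<tau>' where "Suc (M + n) \<le> \<tau>' + t" "\<tau>' \<le> M + n" "X \<tau>'" by auto
  moreover from this assms(2) have "\<tau>' \<le> M" by (meson not_le)
  ultimately show "n < t" by linarith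
next
  assume "n < t"
  then show "\<exists>\<tau>'. Suc (M + n) \<le> \<tau>' + t \<and> \<tau>' < Suc (M + n) \<and> X \<tau>'"
    using assms(1) by (intro exI[of _ M]) simp
qed

datatype neuron = Inp | Out | Delay | Reset | Go | Empty
  | Reg nat | Reg_inh nat | Held nat | Low_zero nat | Lowest nat

instance neuron :: countable by countable_datatype

context
  fixes k v0 p :: nat
begin

definition neurons :: "neuron set" where
  "neurons = {Inp, Out, Delay, Reset, Go, Empty} \<union>
     (\<Union>i<k. {Reg i, Reg_inh i, Held i, Low_zero i, Lowest i})"

text \<open>\<open>Reg i\<close> is bit \<open>i\<close> of the register and \<open>Reg_inh i\<close> an inhibitory copy of it, needed
because the outgoing weights of a neuron all have one sign. From a register value \<open>v\<close> the
second layer computes \<open>Held i = bit v i\<close>, \<open>Low_zero i = (2 ^ i dvd v)\<close>, \<open>Lowest i\<close> (both)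
and \<open>Empty = (v = 0)\<close>; \<open>Low_zero i\<close> and \<open>Empty\<close> have threshold 0 and fire unless inhibited. The
register then fires where \<open>Held i + Low_zero i - 2 Lowest i - 2 Empty \<ge> 1\<close>, which is
\<open>bit (v - 1) i\<close> with \<open>0 - 1 = 0\<close>. \<open>Delay\<close>, \<open>Reset\<close> and \<open>Go\<close> repeat the input after one and two
rounds: \<open>Reset\<close> outweighs every excitation of a counter neuron and \<open>Go\<close> loads \<open>v0\<close>. The
output also reads the second layer from bit \<open>p\<close> on, which lengthens the timeout by \<open>1 - p\<close>
rounds.\<close>

fun weight :: "neuron \<Rightarrow> neuron \<Rightarrow> real" where
  "weight Inp b = of_bool (b \<in> {Out, Delay, Reset})"
| "weight Delay b = of_bool (b \<in> {Out, Go})"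
| "weight Go b = of_bool (b = Out \<or> (\<exists>i. bit v0 i \<and> b \<in> {Reg i, Reg_inh i}))"
| "weight Reset b = (if b \<in> {Inp, Out, Delay, Reset, Go} then 0 else -4)"
| "weight (Reg i) b = of_bool (b \<in> {Out, Held i, Lowest i})"
| "weight (Reg_inh i) b = - of_bool (b = Empty \<or> (\<exists>j>i. b \<in> {Low_zero j, Lowest j}))"
| "weight (Held i) b = of_bool (b \<in> {Reg i, Reg_inh i} \<or> b = Out \<and> p \<le> i)"
| "weight (Low_zero i) b = of_bool (b \<in> {Reg i, Reg_inh i})"
| "weight (Lowest i) b = -2 * of_bool (b \<in> {Reg i, Reg_inh i})"
| "weight Empty b = -2 * of_bool (\<exists>i. b \<in> {Reg i, Reg_inh i})"
| "weight Out b = 0"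

definition threshold :: "neuron \<Rightarrow> real" where
  "threshold b = (case b of Low_zero _ \<Rightarrow> 0 | Empty \<Rightarrow> 0 | _ \<Rightarrow> 1)"

definition counter_net :: net where
  "counter_net = net_of neurons Inp Out weight threshold"

lemma finite_neurons: "finite neurons"
  by (simp add: neurons_def)

context
  fixes X :: "nat \<Rightarrow> bool"
begin

definition firing :: "nat \<Rightarrow> neuron \<Rightarrow> bool" where
  "firing \<tau> a \<longleftrightarrow> fires counter_net X \<tau> (to_nat a)"

lemma firing_Inp: "firing \<tau> Inp = X \<tau>"
  by (simp add: firing_def counter_net_def fires_net_of_inp)

lemma firing_0: "a \<noteq> Inp \<Longrightarrow> \<not> firing 0 a"
  unfolding firing_def counter_net_def by (rule fires_net_of_0)

lemma firing_Suc:
  assumes "a \<in> neurons" "a \<noteq> Inp"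
  shows "firing (Suc \<tau>) a \<longleftrightarrow> threshold a \<le> (\<Sum>b\<in>neurons. weight b a * of_bool (firing \<tau> b))"
  using fires_net_of_Suc[OF assms] by (simp add: firing_def counter_net_def)

lemma firing_Suc_support:
  assumes "a \<in> neurons" "a \<noteq> Inp" "S \<subseteq> neurons" "\<forall>b\<in>neurons - S. weight b a = 0"
  shows "firing (Suc \<tau>) a \<longleftrightarrow> threshold a \<le> (\<Sum>b\<in>S. weight b a * of_bool (firing \<tau> b))"
proof -
  have "(\<Sum>b\<in>neurons. weight b a * of_bool (firing \<tau> b)) = (\<Sum>b\<in>S. weight b a * of_bool (firing \<tau> b))"
    using assms(3,4) finite_neurons by (intro sum.mono_neutral_right) auto
  then show ?thesis using firing_Suc[OF assms(1,2)] by simp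
qed

lemma firing_Suc_or_gate:
  assumes "a \<in> neurons" "a \<noteq> Inp" "threshold a = 1" "\<forall>b\<in>neurons. weight b a \<in> {0, 1}"
  shows "firing (Suc \<tau>) a \<longleftrightarrow> (\<exists>b\<in>neurons. weight b a = 1 \<and> firing \<tau> b)"
proof
  assume "firing (Suc \<tau>) a"
  then have "1 \<le> (\<Sum>b\<in>neurons. weight b a * of_bool (firing \<tau> b))"
    using firing_Suc[OF assms(1,2)] assms(3) by simp
  show "\<exists>b\<in>neurons. weight b a = 1 \<and> firing \<tau> b"
  proof (rule ccontr)
    assume "\<not> ?thesis"
    then have "(\<Sum>b\<in>neurons. weight b a * of_bool (firing \<tau> b)) = 0"
      using assms(4) by (intro sum.neutral) fastforce
    with \<open>1 \<le> _\<close> show False by simp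
  qed
next
  assume "\<exists>b\<in>neurons. weight b a = 1 \<and> firing \<tau> b"
  then obtain b where b: "b \<in> neurons" "weight b a = 1" "firing \<tau> b" by blast
  have "weight b a * of_bool (firing \<tau> b) \<le> (\<Sum>b\<in>neurons. weight b a * of_bool (firing \<tau> b))"
    using b(1) assms(4) finite_neurons by (intro member_le_sum) auto
  then show "firing (Suc \<tau>) a"
    using firing_Suc[OF assms(1,2)] assms(3) b by simp
qed

lemma firing_Suc_Out:
  "firing (Suc \<tau>) Out \<longleftrightarrow> X \<tau> \<or> firing \<tau> Delay \<or> firing \<tau> Go \<or> (\<exists>i<k. firing \<tau> (Reg i))
     \<or> (\<exists>i<k. p \<le> i \<and> firing \<tau> (Held i))"
  by (subst firing_Suc_or_gate) (auto simp: neurons_def threshold_def firing_Inp)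

lemma firing_Suc_Delay: "firing (Suc \<tau>) Delay = X \<tau>"
  by (subst firing_Suc_or_gate) (auto simp: neurons_def threshold_def firing_Inp)

lemma firing_Suc_Reset: "firing (Suc \<tau>) Reset = X \<tau>"
  by (subst firing_Suc_or_gate) (auto simp: neurons_def threshold_def firing_Inp)

lemma firing_Suc_Go: "firing (Suc \<tau>) Go = firing \<tau> Delay"
  by (subst firing_Suc_or_gate) (auto simp: neurons_def threshold_def)

lemma firing_Suc_Held:
  assumes "i < k"
  shows "firing (Suc \<tau>) (Held i) \<longleftrightarrow> firing \<tau> (Reg i) \<and> \<not> firing \<tau> Reset"
proof -
  have "firing (Suc \<tau>) (Held i) \<longleftrightarrow>
      threshold (Held i) \<le> (\<Sum>b\<in>{Reg i, Reset}. weight b (Held i) * of_bool (firing \<tau> b))"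
    using assms by (intro firing_Suc_support) (auto simp: neurons_def)
  then show ?thesis by (simp add: threshold_def del: sum_mult_of_bool_eq)
qed

lemma sum_Reg_inh_below:
  assumes "\<And>j. j < i \<Longrightarrow> weight (Reg_inh j) a = -1"
  shows "(\<Sum>b\<in>Reg_inh ` {..<i}. weight b a * of_bool (firing \<tau> b)) =
    - of_nat (card {j. j < i \<and> firing \<tau> (Reg_inh j)})"
proof -
  have "(\<Sum>b\<in>Reg_inh ` {..<i}. weight b a * of_bool (firing \<tau> b)) =
      (\<Sum>j<i. - of_bool (firing \<tau> (Reg_inh j)))"
    by (rule sum.reindex_cong[of Reg_inh]) (simp_all add: inj_on_def assms del: weight.simps)
  also have "\<dots> = - of_nat (card {j. j < i \<and> firing \<tau> (Reg_inh j)})"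
    by (simp add: sum_negf Int_def)
  finally show ?thesis .
qed

lemma firing_Suc_Low_zero:
  assumes "i < k"
  shows "firing (Suc \<tau>) (Low_zero i) \<longleftrightarrow> \<not> firing \<tau> Reset \<and> (\<forall>j<i. \<not> firing \<tau> (Reg_inh j))"
proof -
  have "firing (Suc \<tau>) (Low_zero i) \<longleftrightarrow> threshold (Low_zero i) \<le>
      (\<Sum>b\<in>insert Reset (Reg_inh ` {..<i}). weight b (Low_zero i) * of_bool (firing \<tau> b))"
    using assms by (intro firing_Suc_support) (auto simp: neurons_def)
  also have "\<dots> \<longleftrightarrow> 0 \<le> -4 * of_bool (firing \<tau> Reset) - real (card {j. j < i \<and> firing \<tau> (Reg_inh j)})"
    by (subst sum.insert) (auto simp: sum_Reg_inh_below threshold_def simp del: sum_mult_of_bool_eq)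
  finally show ?thesis
    by (cases "firing \<tau> Reset") simp_all
qed

lemma firing_Suc_Empty:
  "firing (Suc \<tau>) Empty \<longleftrightarrow> \<not> firing \<tau> Reset \<and> (\<forall>j<k. \<not> firing \<tau> (Reg_inh j))"
proof -
  have "firing (Suc \<tau>) Empty \<longleftrightarrow> threshold Empty \<le>
      (\<Sum>b\<in>insert Reset (Reg_inh ` {..<k}). weight b Empty * of_bool (firing \<tau> b))"
    by (intro firing_Suc_support) (auto simp: neurons_def)
  also have "\<dots> \<longleftrightarrow> 0 \<le> -4 * of_bool (firing \<tau> Reset) - real (card {j. j < k \<and> firing \<tau> (Reg_inh j)})"
    by (subst sum.insert) (auto simp: sum_Reg_inh_below threshold_def simp del: sum_mult_of_bool_eq)
  finally show ?thesis
    by (cases "firing \<tau> Reset") simp_all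
qed

lemma firing_Suc_Lowest:
  assumes "i < k"
  shows "firing (Suc \<tau>) (Lowest i) \<longleftrightarrow>
    \<not> firing \<tau> Reset \<and> firing \<tau> (Reg i) \<and> (\<forall>j<i. \<not> firing \<tau> (Reg_inh j))"
proof -
  have "firing (Suc \<tau>) (Lowest i) \<longleftrightarrow> threshold (Lowest i) \<le>
      (\<Sum>b\<in>insert Reset (insert (Reg i) (Reg_inh ` {..<i})).
         weight b (Lowest i) * of_bool (firing \<tau> b))"
    using assms by (intro firing_Suc_support) (auto simp: neurons_def)
  also have "\<dots> \<longleftrightarrow> 1 \<le> -4 * of_bool (firing \<tau> Reset) + of_bool (firing \<tau> (Reg i))
      - real (card {j. j < i \<and> firing \<tau> (Reg_inh j)})"
    by (auto simp: sum_Reg_inh_below threshold_def image_iff simp del: sum_mult_of_bool_eq)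
  finally show ?thesis
    by (cases "firing \<tau> Reset"; cases "firing \<tau> (Reg i)") simp_all
qed

lemma firing_Suc_Reg:
  assumes "i < k" "a = Reg i \<or> a = Reg_inh i"
  shows "firing (Suc \<tau>) a \<longleftrightarrow> \<not> firing \<tau> Reset \<and>
    (1::real) \<le> of_bool (firing \<tau> (Held i)) + of_bool (firing \<tau> (Low_zero i))
      - 2 * of_bool (firing \<tau> (Lowest i)) - 2 * of_bool (firing \<tau> Empty)
      + of_bool (bit v0 i \<and> firing \<tau> Go)"
proof -
  have w: "weight Reset a = -4" "weight Go a = of_bool (bit v0 i)" "weight (Held i) a = 1"
    "weight (Low_zero i) a = 1" "weight (Lowest i) a = -2" "weight Empty a = -2" "threshold a = 1"
    using assms(2) by (auto simp: threshold_def)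
  have "firing (Suc \<tau>) a \<longleftrightarrow> threshold a \<le>
      (\<Sum>b\<in>{Reset, Go, Held i, Low_zero i, Lowest i, Empty}. weight b a * of_bool (firing \<tau> b))"
    using assms by (intro firing_Suc_support) (auto simp: neurons_def)
  also have "\<dots> \<longleftrightarrow> (1::real) \<le> -4 * of_bool (firing \<tau> Reset) + (of_bool (firing \<tau> (Held i))
      + of_bool (firing \<tau> (Low_zero i)) - 2 * of_bool (firing \<tau> (Lowest i))
      - 2 * of_bool (firing \<tau> Empty) + of_bool (bit v0 i \<and> firing \<tau> Go))"
    by (simp add: w algebra_simps del: weight.simps sum_mult_of_bool_eq)
  finally show ?thesis by (cases "firing \<tau> Reset") (simp_all add: of_bool_def)
qed

lemma firing_Reg_inh: "i < k \<Longrightarrow> firing \<tau> (Reg_inh i) = firing \<tau> (Reg i)"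
  using firing_Suc_Reg[of i "Reg i"] firing_Suc_Reg[of i "Reg_inh i"]
  by (cases \<tau>) (simp_all add: firing_0)

definition quiet :: "nat \<Rightarrow> bool" where
  "quiet \<tau> \<longleftrightarrow> \<not> firing \<tau> Delay \<and> \<not> firing \<tau> Reset \<and> \<not> firing \<tau> Go"

definition reg_holds :: "nat \<Rightarrow> nat \<Rightarrow> bool" where
  "reg_holds v \<tau> \<longleftrightarrow> (\<forall>i<k. firing \<tau> (Reg i) \<longleftrightarrow> bit v i)"

definition stage_holds :: "nat \<Rightarrow> nat \<Rightarrow> bool" where
  "stage_holds v \<tau> \<longleftrightarrow>
     (\<forall>i<k. (firing \<tau> (Held i) \<longleftrightarrow> bit v i) \<and> (firing \<tau> (Low_zero i) \<longleftrightarrow> 2 ^ i dvd v)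
        \<and> (firing \<tau> (Lowest i) \<longleftrightarrow> bit v i \<and> 2 ^ i dvd v))
     \<and> (firing \<tau> Empty \<longleftrightarrow> 2 ^ k dvd v)"

definition stage_clear :: "nat \<Rightarrow> bool" where
  "stage_clear \<tau> \<longleftrightarrow>
     (\<forall>i<k. \<not> firing \<tau> (Held i) \<and> \<not> firing \<tau> (Low_zero i) \<and> \<not> firing \<tau> (Lowest i))
     \<and> \<not> firing \<tau> Empty"

lemma quiet_Suc_iff: "quiet (Suc \<tau>) \<longleftrightarrow> \<not> X \<tau> \<and> \<not> firing \<tau> Delay"
  by (simp add: quiet_def firing_Suc_Delay firing_Suc_Reset firing_Suc_Go)

lemma stage_holds_Suc:
  assumes "reg_holds v \<tau>" "\<not> firing \<tau> Reset"
  shows "stage_holds v (Suc \<tau>)"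
proof -
  have "(\<forall>j<i. \<not> firing \<tau> (Reg_inh j)) \<longleftrightarrow> 2 ^ i dvd v" if "i \<le> k" for i
    using assms(1) that by (auto simp: reg_holds_def firing_Reg_inh exp_dvd_iff_not_bit_below)
  then show ?thesis using assms
    by (simp add: stage_holds_def reg_holds_def firing_Suc_Held firing_Suc_Low_zero
        firing_Suc_Lowest firing_Suc_Empty)
qed

lemma reg_holds_Suc_decr:
  assumes "stage_holds v \<tau>" "\<not> firing \<tau> Reset" "\<not> firing \<tau> Go" "v < 2 ^ k"
  shows "reg_holds (v - 1) (Suc \<tau>)"
  unfolding reg_holds_def
proof (intro allI impI)
  fix i assume "i < k"
  have empty: "2 ^ k dvd v \<longleftrightarrow> v = 0"
    using assms(4) by (auto elim: dvdE)
  show "firing (Suc \<tau>) (Reg i) \<longleftrightarrow> bit (v - 1) i"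
  proof (cases "v = 0")
    case True
    then show ?thesis using assms(1-3) \<open>i < k\<close> by (simp add: firing_Suc_Reg stage_holds_def)
  next
    case False
    then show ?thesis using assms(1-3) \<open>i < k\<close> empty bit_decr_iff[of v i]
      by (simp add: firing_Suc_Reg stage_holds_def of_bool_def)
  qed
qed

lemma reg_holds_Suc_load:
  assumes "stage_clear \<tau>" "\<not> firing \<tau> Reset"
  shows "reg_holds (if firing \<tau> Go then v0 else 0) (Suc \<tau>)"
  using assms by (simp add: reg_holds_def stage_clear_def firing_Suc_Reg)

lemma after_reset:
  assumes "firing \<tau> Reset"
  shows "reg_holds 0 (Suc \<tau>)" "stage_clear (Suc \<tau>)"
  using assms by (simp_all add: reg_holds_def stage_clear_def firing_Suc_Reg firing_Suc_Held
      firing_Suc_Low_zero firing_Suc_Lowest firing_Suc_Empty)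

text \<open>The register and the second layer take turns, so the counter drops by one every other
round while the idle layer carries the value 0.\<close>

definition counting :: "nat \<Rightarrow> nat \<Rightarrow> bool" where
  "counting n \<tau> \<longleftrightarrow> quiet \<tau> \<and>
     (if even n then reg_holds (v0 - n div 2) \<tau> \<and> stage_holds 0 \<tau>
      else reg_holds 0 \<tau> \<and> stage_holds (v0 - n div 2) \<tau>)"

lemma counting_Suc:
  assumes "counting n \<tau>" "\<not> X \<tau>" "v0 < 2 ^ k"
  shows "counting (Suc n) (Suc \<tau>)"
proof -
  have "quiet (Suc \<tau>)"
    using assms(1,2) quiet_Suc_iff[of \<tau>] unfolding counting_def quiet_def[of \<tau>] by blast
  moreover have "\<not> firing \<tau> Reset" "\<not> firing \<tau> Go"
    using assms(1) by (simp_all add: counting_def quiet_def)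
  moreover have "v0 - n div 2 - 1 = v0 - Suc n div 2" if "odd n" using that by simp
  ultimately show ?thesis
    using assms(1,3) stage_holds_Suc reg_holds_Suc_decr[of 0 \<tau>]
      reg_holds_Suc_decr[of "v0 - n div 2" \<tau>]
    by (cases "even n") (auto simp: counting_def)
qed

lemma counting_after_input:
  assumes "X M" "\<forall>i. M < i \<and> i \<le> M + 2 + n \<longrightarrow> \<not> X i" "v0 < 2 ^ k"
  shows "counting n (M + 3 + n)"
  using assms(2)
proof (induction n)
  case 0
  then have "\<not> X (M + 1)" "\<not> X (M + 2)" by auto
  have "firing (M + 1) Reset" "firing (M + 1) Delay"
    using assms(1) by (simp_all add: firing_Suc_Reset firing_Suc_Delay)
  then have "reg_holds 0 (M + 2)" "stage_clear (M + 2)" "firing (M + 2) Go" "\<not> firing (M + 2) Reset"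
    using after_reset[of "M + 1"] \<open>\<not> X (M + 1)\<close>
    by (simp_all add: firing_Suc_Go firing_Suc_Reset numeral_eq_Suc)
  then have "reg_holds v0 (M + 3)" "stage_holds 0 (M + 3)"
    using reg_holds_Suc_load[of "M + 2"] stage_holds_Suc[of 0 "M + 2"]
    by (simp_all add: numeral_eq_Suc)
  moreover have "quiet (M + 3)"
    using \<open>\<not> X (M + 1)\<close> \<open>\<not> X (M + 2)\<close>
    by (simp add: quiet_Suc_iff firing_Suc_Delay numeral_eq_Suc)
  ultimately show ?case by (simp add: counting_def)
next
  case (Suc n)
  then have "counting n (M + 3 + n)" "\<not> X (M + 3 + n)" by simp_all
  then have "counting (Suc n) (Suc (M + 3 + n))" using counting_Suc assms(3) by blast
  then show ?case by simp
qed

lemma firing_Suc_Out_counting: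
  assumes "quiet \<tau>" "\<not> X \<tau>" "reg_holds u \<tau>" "stage_holds w \<tau>" "u < 2 ^ k" "w < 2 ^ k"
  shows "firing (Suc \<tau>) Out \<longleftrightarrow> 1 \<le> u \<or> 2 ^ p \<le> w"
proof -
  have "(\<exists>i<k. firing \<tau> (Reg i)) \<longleftrightarrow> (\<exists>i<k. bit u i)"
    "(\<exists>i<k. p \<le> i \<and> firing \<tau> (Held i)) \<longleftrightarrow> (\<exists>i<k. p \<le> i \<and> bit w i)"
    using assms(3,4) by (auto simp: reg_holds_def stage_holds_def)
  then show ?thesis using assms(1,2,5,6) ex_bit_ge_iff[of u k 0] ex_bit_ge_iff[of w k p]
    by (simp add: firing_Suc_Out quiet_def)
qed

lemma firing_Out_after_input:
  assumes "X M" "\<forall>i. M < i \<and> i \<le> M + n \<longrightarrow> \<not> X i" "1 \<le> v0" "v0 < 2 ^ k" "p \<le> 1"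
  shows "firing (Suc (M + n)) Out \<longleftrightarrow> n < 2 * v0 + 3 - p"
proof (cases "n < 3")
  case True
  have "firing (Suc M) Out" "firing (Suc (Suc M)) Out" "firing (Suc (Suc (Suc M))) Out"
    using assms(1) by (simp_all add: firing_Suc_Out firing_Suc_Delay firing_Suc_Go)
  then have "firing (Suc (M + n)) Out"
    using True by (auto simp: less_Suc_eq numeral_eq_Suc)
  then show ?thesis using True assms(3,5) by simp
next
  case False
  then obtain m where n: "n = m + 3" by (metis add.commute le_Suc_ex not_less)
  define \<tau> where "\<tau> = M + 3 + m"
  have state: "counting m \<tau>"
    using counting_after_input[OF assms(1) _ assms(4), of m] assms(2) n by (simp add: \<tau>_def)
  have "\<not> X \<tau>" using assms(2) n by (simp add: \<tau>_def)
  have "v0 - m div 2 < 2 ^ k" using assms(4) by linarith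
  then have "firing (Suc \<tau>) Out \<longleftrightarrow>
      (if even m then 1 \<le> v0 - m div 2 else 2 ^ p \<le> v0 - m div 2)"
    using state \<open>\<not> X \<tau>\<close> firing_Suc_Out_counting[of \<tau> "v0 - m div 2" 0]
      firing_Suc_Out_counting[of \<tau> 0 "v0 - m div 2"]
    by (cases "even m") (auto simp: counting_def)
  also have "\<dots> \<longleftrightarrow> n < 2 * v0 + 3 - p"
    using assms(5) n by (cases p) (auto, presburger+)
  finally show ?thesis using n by (simp add: \<tau>_def add.commute add.left_commute)
qed

lemma idle_before_input:
  "(\<forall>i<\<tau>. \<not> X i) \<Longrightarrow> quiet \<tau> \<and> reg_holds 0 \<tau> \<and> (stage_holds 0 \<tau> \<or> stage_clear \<tau>)"
proof (induction \<tau>)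
  case 0
  then show ?case by (simp add: quiet_def reg_holds_def stage_clear_def firing_0)
next
  case (Suc \<tau>)
  then have IH: "quiet \<tau>" "reg_holds 0 \<tau>" "stage_holds 0 \<tau> \<or> stage_clear \<tau>" and "\<not> X \<tau>" by auto
  then have "quiet (Suc \<tau>)" using quiet_Suc_iff[of \<tau>] unfolding quiet_def[of \<tau>] by blast
  moreover have "reg_holds 0 (Suc \<tau>)"
    using IH reg_holds_Suc_decr[of 0 \<tau>] reg_holds_Suc_load[of \<tau>] by (auto simp: quiet_def)
  moreover have "stage_holds 0 (Suc \<tau>)"
    using IH stage_holds_Suc by (simp add: quiet_def)
  ultimately show ?case by simp
qed

lemma not_firing_Out_before_input:
  assumes "\<forall>i<\<tau>. \<not> X i"
  shows "\<not> firing \<tau> Out"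
proof (cases \<tau>)
  case 0
  then show ?thesis by (simp add: firing_0)
next
  case (Suc \<sigma>)
  then have "quiet \<sigma>" "reg_holds 0 \<sigma>" "stage_holds 0 \<sigma> \<or> stage_clear \<sigma>" "\<not> X \<sigma>"
    using assms idle_before_input[of \<sigma>] by auto
  then show ?thesis
    using Suc by (auto simp: firing_Suc_Out quiet_def reg_holds_def stage_holds_def stage_clear_def)
qed

end

lemma valid_counter_net: "valid_net counter_net"
proof -
  have "(\<forall>b. 0 \<le> weight a b) \<or> (\<forall>b. weight a b \<le> 0)" for a
    by (cases a) auto
  then show ?thesis
    unfolding counter_net_def
    by (intro valid_net_of)
      (auto simp: finite_neurons neurons_def threshold_def split: neuron.split)
qed

lemma aux_count_counter_net: "aux_count counter_net \<le> 5 * k + 4"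
proof -
  have "neurons - {Inp, Out} \<subseteq> {Delay, Reset, Go, Empty} \<union>
      (\<Union>i<k. {Reg i, Reg_inh i, Held i, Low_zero i, Lowest i})"
    by (auto simp: neurons_def)
  then have "card (neurons - {Inp, Out}) \<le> card ({Delay, Reset, Go, Empty} \<union>
      (\<Union>i<k. {Reg i, Reg_inh i, Held i, Low_zero i, Lowest i}))"
    by (intro card_mono) auto
  also have "\<dots> \<le> 4 + (\<Sum>i<k. card {Reg i, Reg_inh i, Held i, Low_zero i, Lowest i})"
    by (intro order_trans[OF card_Un_le] add_mono card_UN_le) auto
  also have "\<dots> \<le> 4 + 5 * k"
    using sum_bounded_above[of "{..<k}"
        "\<lambda>i. card {Reg i, Reg_inh i, Held i, Low_zero i, Lowest i}" 5]
    by (simp add: card_insert_le_m1)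
  finally show ?thesis
    by (simp add: counter_net_def aux_count_net_of neurons_def)
qed

lemma counter_net_is_timer:
  assumes "1 \<le> v0" "v0 < 2 ^ k" "p \<le> 1"
  shows "is_det_timer counter_net (2 * v0 + 3 - p)"
  unfolding is_det_timer_def
proof (intro conjI allI valid_counter_net)
  fix X \<tau>
  let ?t = "2 * v0 + 3 - p"
  have out: "fires counter_net X \<tau> (outp counter_net) = firing X \<tau> Out"
    by (simp add: firing_def counter_net_def net_of_def)
  show "fires counter_net X \<tau> (outp counter_net) \<longleftrightarrow> (\<exists>\<tau>'. \<tau> \<le> \<tau>' + ?t \<and> \<tau>' < \<tau> \<and> X \<tau>')"
  proof (cases "\<exists>i<\<tau>. X i")
    case False
    then show ?thesis unfolding out using not_firing_Out_before_input[of \<tau> X] by auto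
  next
    case True
    then obtain M where M: "M < \<tau>" "X M" and after: "\<forall>i. M < i \<and> i < \<tau> \<longrightarrow> \<not> X i"
      by (rule obtain_last_input)
    then obtain n where \<tau>: "\<tau> = Suc (M + n)" using less_iff_Suc_add by blast
    have "firing X \<tau> Out \<longleftrightarrow> n < ?t"
      unfolding \<tau> using firing_Out_after_input[of X M n] M(2) after assms \<tau> by simp
    moreover have "(\<exists>\<tau>'. \<tau> \<le> \<tau>' + ?t \<and> \<tau>' < \<tau> \<and> X \<tau>') \<longleftrightarrow> n < ?t"
      unfolding \<tau> using recent_input_iff_last_input[of X M n] M(2) after \<tau> by simp
    ultimately show ?thesis unfolding out by simp
  qed
qed

end

lemma det_timer_exists_floor_log:
  assumes "4 \<le> t"
  shows "\<exists>N. is_det_timer N t \<and> aux_count N \<le> 5 * floor_log t + 4"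
proof -
  define k where "k = floor_log t"
  define v0 where "v0 = (t - 2) div 2"
  define p :: nat where "p = of_bool (even t)"
  have "t < 2 * 2 ^ k" using floor_log_exp2_gt[of t] by (simp add: k_def)
  then have "1 \<le> v0" "v0 < 2 ^ k" using assms by (auto simp: v0_def)
  moreover have "p \<le> 1" "t = 2 * v0 + 3 - p"
    using assms by (auto simp: p_def v0_def)
  ultimately show ?thesis
    using counter_net_is_timer aux_count_counter_net unfolding k_def by metis
qed

lemma log2_ge_2: "4 \<le> t \<Longrightarrow> 2 \<le> log 2 (real t)"
  using le_log2_of_power[of 2 t] by simp

lemma det_timer_size_upper:
  assumes "4 \<le> t"
  shows "\<exists>N. is_det_timer N t \<and> real (aux_count N) \<le> 7 * log 2 (real t)"
proof -
  obtain N where "is_det_timer N t" "aux_count N \<le> 5 * floor_log t + 4"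
    using det_timer_exists_floor_log assms by blast
  moreover have "floor_log t \<le> log 2 (real t)"
    using le_log2_of_power[OF floor_log_exp2_le] assms by simp
  ultimately show ?thesis
    using log2_ge_2[OF assms] by (intro exI[of _ N]) linarith
qed

lemma det_timer_size_lower:
  assumes "4 \<le> t" "is_det_timer N t"
  shows "1 / 2 * log 2 (real t) \<le> real (aux_count N)"
proof -
  have "t < 2 ^ (aux_count N + 1)" using det_timer_time_bound[OF assms(2)] by simp
  then have "log 2 (real t) < real (aux_count N + 1)"
    using log2_of_power_less assms(1) by (metis gr0I not_numeral_le_zero)
  then show ?thesis using log2_ge_2[OF assms(1)] by linarith
qed

theorem theorem1:
  shows "(\<exists>c > 0. \<exists>t0. \<forall>t \<ge> t0. \<exists>N. is_det_timer N t \<and>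
            real (aux_count N) \<le> c * log 2 (real t))
       \<and> (\<exists>c > 0. \<exists>t0. \<forall>t \<ge> t0. \<forall>N. is_det_timer N t \<longrightarrow>
            real (aux_count N) \<ge> c * log 2 (real t))"
proof
  show "\<exists>c > 0. \<exists>t0. \<forall>t \<ge> t0. \<exists>N. is_det_timer N t \<and> real (aux_count N) \<le> c * log 2 (real t)"
    using det_timer_size_upper by (intro exI[of _ 7] conjI exI[of _ 4]) auto
  show "\<exists>c > 0. \<exists>t0. \<forall>t \<ge> t0. \<forall>N. is_det_timer N t \<longrightarrow> real (aux_count N) \<ge> c * log 2 (real t)"
    using det_timer_size_lower by (intro exI[of _ "1 / 2"] conjI exI[of _ 4]) auto
qed

end
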